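(* Consider the fossilized birth-death (FBD) process with asymmetric speciation with parameters $\lambda>0$, $\mu$, $\psi>0$, $\rho$ and origin time $x_0$, in the case of guaranteed complete sampling, i.e. $\mu=0$ and $\rho=1$. Let $\mathcal{T}^o_e$ be an oriented extended sampled tree with $n$ sampled species (stratigraphic ranges) having birth times $b_1,\dots,b_n$, and with $k$ sampled fossils in total. Then $$f[\mathcal{T}^o_e \mid \lambda,\mu,\psi,\rho,x_0] = \psi^k\,\lambda^{n-1}\prod_{i=1}^n e^{-(\lambda+\psi)b_i}.$$
   Context: FBD process with asymmetric (budding) speciation: time is measured backwards from the present (time $0$). The process starts with one lineage at time $x_0>0$. Each lineage independently undergoes branching speciation at rate $\lambda$, extinction at rate $\mu\ge 0$, and fossil sampling at rate $\psi$ (each such event produces a fossil sample on that lineage at that time); at time $0$ each surviving lineage is sampled independently with probability $\rho\in(0,1]$. At each branching event, one daughter branch is labelled $A$ (continuation of the ancestral species) and the other $D$ (new descendant species); this labelling is called the orientation. A species is a maximal path consisting of the initial branch or a $D$-branch followed by zero or more $A$-branches. The complete tree contains all lineages and all samples. For a sampled species $i$ (one with at least one sample), its stratigraphic range is the lineage segment between the time $o_i$ of its oldest sample and the time $y_i$ of its youngest sample ($o_i\ge y_i$); $d_i$ is its extinction time ($d_i=0$ if it survives to the present). The extended sampled tree is obtained from the complete tree by deleting all lineages that lead neither to a sample nor to the extinction point $d_i$ of a sampled species $i$ (i.e. for each sampled species the lineage is kept down to $d_i$); it is oriented, inheriting the $A/D$ labels of retained branching events, and it is a binary tree with $n-1$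 branching events when $n$ species are sampled. The birth time $b_i$ of sampled species $i$ is the time of the branching event of the extended sampled tree that starts the most recent $D$-branch ancestral to (or containing) the range $i$; for the unique range lying on the lineage started at the origin, $b_i=x_0$. The density $f$ is the joint probability density of the event times (branching times, fossil sampling times, extinction times) and discrete structure of the tree, conditioned on the process producing at least one sample. *)

theory Defs
  imports Complex_Main
begin

text \<open>A tree value describes a lineage from its
start time (supplied by the context: the origin x0, or the time of the parent
branching event) downwards in (backward) time.
  \<^item> Extinct d: the lineage goes extinct at time d;
  \<^item> Present b: the lineage survives to the present (time 0); b says whether it
    is sampled at the present;
  \<^item> Fossil t T: a fossil sampling event on the lineage at time t, lineage continues as T;
  \<^item> Branch t A D: a branching event at time t, daughter A (continuation of the
    ancestral species) and daughter D (new descendant species).\<close>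

datatype ftree =
    Extinct real
  | Present bool
  | Fossil real ftree
  | Branch real ftree ftree

fun valid_tree :: "real \<Rightarrow> ftree \<Rightarrow> bool" where
  "valid_tree s (Extinct d) = (0 < d \<and> d < s)"
| "valid_tree s (Present b) = (0 < s)"
| "valid_tree s (Fossil t T) = (0 < t \<and> t < s \<and> valid_tree t T)"
| "valid_tree s (Branch t A D) = (0 < t \<and> t < s \<and> valid_tree t A \<and> valid_tree t D)"

fun tree_dens :: "real \<Rightarrow> real \<Rightarrow> real \<Rightarrow> real \<Rightarrow> real \<Rightarrow> ftree \<Rightarrow> real" where
  "tree_dens lam mu psi rho s (Extinct d) = exp (-(lam+mu+psi)*(s-d)) * mu"
| "tree_dens lam mu psi rho s (Present b) =
     exp (-(lam+mu+psi)*s) * (if b then rho else 1 - rho)"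
| "tree_dens lam mu psi rho s (Fossil t T) =
     exp (-(lam+mu+psi)*(s-t)) * psi * tree_dens lam mu psi rho t T"
| "tree_dens lam mu psi rho s (Branch t A D) =
     exp (-(lam+mu+psi)*(s-t)) * lam * tree_dens lam mu psi rho t A * tree_dens lam mu psi rho t D"

text \<open>Probability p0(t) that a lineage starting at time t produces no sample
(standard closed-form solution, Stadler 2010).\<close>
definition fbd_c1 :: "real \<Rightarrow> real \<Rightarrow> real \<Rightarrow> real" where
  "fbd_c1 lam mu psi = sqrt ((lam - mu - psi)^2 + 4*lam*psi)"

definition fbd_c2 :: "real \<Rightarrow> real \<Rightarrow> real \<Rightarrow> real \<Rightarrow> real" where
  "fbd_c2 lam mu psi rho = - (lam - mu - 2*lam*rho - psi) / fbd_c1 lam mu psi"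

definition fbd_p0 :: "real \<Rightarrow> real \<Rightarrow> real \<Rightarrow> real \<Rightarrow> real \<Rightarrow> real" where
  "fbd_p0 lam mu psi rho t =
     (let c1 = fbd_c1 lam mu psi; c2 = fbd_c2 lam mu psi rho in
      1 + (-(lam - mu - psi) + c1 * (exp (-c1*t) * (1 - c2) - (1 + c2))
                                   / (exp (-c1*t) * (1 - c2) + (1 + c2))) / (2*lam))"

text \<open>Density of the tree conditioned on at least one sample.\<close>
definition fbd_density :: "real \<Rightarrow> real \<Rightarrow> real \<Rightarrow> real \<Rightarrow> real \<Rightarrow> ftree \<Rightarrow> real" where
  "fbd_density lam mu psi rho x0 T = tree_dens lam mu psi rho x0 T / (1 - fbd_p0 lam mu psi rho x0)"

fun all_present_sampled :: "ftree \<Rightarrow> bool" where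
  "all_present_sampled (Extinct d) = False"
| "all_present_sampled (Present b) = b"
| "all_present_sampled (Fossil t T) = all_present_sampled T"
| "all_present_sampled (Branch t A D) = (all_present_sampled A \<and> all_present_sampled D)"

fun num_fossils :: "ftree \<Rightarrow> nat" where
  "num_fossils (Extinct d) = 0"
| "num_fossils (Present b) = 0"
| "num_fossils (Fossil t T) = Suc (num_fossils T)"
| "num_fossils (Branch t A D) = num_fossils A + num_fossils D"

fun species_sampled :: "ftree \<Rightarrow> bool" where
  "species_sampled (Extinct d) = False"
| "species_sampled (Present b) = b"
| "species_sampled (Fossil t T) = True"
| "species_sampled (Branch t A D) = species_sampled A"

fun species_births :: "real \<Rightarrow> ftree \<Rightarrow> real list"
and desc_births :: "ftree \<Rightarrow> real list" where
  "species_births s T = (if species_sampled T then [s] else []) @ desc_births T"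
| "desc_births (Extinct d) = []"
| "desc_births (Present b) = []"
| "desc_births (Fossil t T) = desc_births T"
| "desc_births (Branch t A D) = desc_births A @ species_births t D"

end

theory Submission
  imports Defs
begin

text \<open>With \<open>\<mu> = 0\<close> and \<open>\<rho> = 1\<close> no lineage can fail to be sampled, so the
conditioning probability \<open>1 - p\<^sub>0(x\<^sub>0)\<close> equals 1.  In a tree in which every
lineage reaches the present, the exponential factors of the lineage segments
telescope: each segment is charged from its start time, and every start time is
the birth time of exactly one (sampled) species.\<close>

lemma all_present_sampled_species_sampled:
  "all_present_sampled T \<Longrightarrow> species_sampled T"
  by (induction T) auto

lemma exp_mult_diff_mult:
  fixes c s t :: real
  shows "exp (c * (s - t)) * exp (c * t) = exp (c * s)"
  by (simp add: exp_add[symmetric] algebra_simps)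

lemma tree_dens_all_present_sampled:
  assumes "all_present_sampled T"
  shows "tree_dens lam mu psi rho s T =
           psi ^ num_fossils T * lam ^ length (desc_births T)
           * rho ^ Suc (length (desc_births T)) * exp (-(lam + mu + psi) * s)
           * (\<Prod>b\<leftarrow>desc_births T. exp (-(lam + mu + psi) * b))"
  using assms
proof (induction T arbitrary: s)
  case (Fossil t T)
  then show ?case
    using exp_mult_diff_mult[of "-(lam + mu + psi)" s t]
    by (simp add: ac_simps)
next
  case (Branch t A D)
  then have "species_sampled D"
    by (simp add: all_present_sampled_species_sampled)
  with Branch show ?case
    using exp_mult_diff_mult[of "-(lam + mu + psi)" s t]
    by (simp add: power_add ac_simps)
qed simp_all

lemma fbd_p0_complete_sampling:
  assumes "lam > 0" and "psi \<ge> 0"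
  shows "fbd_p0 lam 0 psi 1 t = 0"
proof -
  have "(lam - psi)\<^sup>2 + 4 * lam * psi = (lam + psi)\<^sup>2"
    by (simp add: power2_eq_square algebra_simps)
  with assms have c1: "fbd_c1 lam 0 psi = lam + psi"
    by (simp add: fbd_c1_def)
  with assms have c2: "fbd_c2 lam 0 psi 1 = 1"
    by (simp add: fbd_c2_def)
  from assms show ?thesis
    by (simp add: fbd_p0_def c1 c2 Let_def field_simps)
qed

theorem theorem1:
  fixes lam psi x0 :: real and T :: ftree
  assumes "lam > 0" and "psi > 0" and "x0 > 0"
    and "valid_tree x0 T"
    and "all_present_sampled T"
  shows "fbd_density lam 0 psi 1 x0 T =
           psi ^ num_fossils T * lam ^ (length (species_births x0 T) - 1)
           * (\<Prod>b\<leftarrow>species_births x0 T. exp (-(lam + psi) * b))"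
proof -
  have births: "species_births x0 T = x0 # desc_births T"
    using assms(5) by (simp add: all_present_sampled_species_sampled)
  have "fbd_density lam 0 psi 1 x0 T = tree_dens lam 0 psi 1 x0 T"
    using assms(1,2) by (simp add: fbd_density_def fbd_p0_complete_sampling)
  then show ?thesis
    unfolding births
    using tree_dens_all_present_sampled[OF assms(5), of lam 0 psi 1 x0]
    by (simp add: ac_simps)
qed

end
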